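(* Let $G$ be $\mathrm{Sym}(d)$ or $\mathrm{Alt}(d)$ for some $d\ge 2$, acting naturally on $X=\{1,\dots,d\}$. Then the natural action does not extend properly to a $2$-by-block-transitive action: there is no $G$-set $\Omega$ with a $G$-equivariant surjection $\Omega\to X$ whose fibres have size at least $2$ such that $G$ acts transitively on ordered pairs of points of $\Omega$ lying in distinct fibres. *)

theory Defs
  imports "HOL-Algebra.Sym_Groups" "HOL-Algebra.Group_Action"
begin

definition proper_2bbt_extension ::
  "('g, 'm) monoid_scheme \<Rightarrow> 'x set \<Rightarrow> ('g \<Rightarrow> 'x \<Rightarrow> 'x) \<Rightarrow> 'w set \<Rightarrow> ('g \<Rightarrow> 'w \<Rightarrow> 'w) \<Rightarrow> ('w \<Rightarrow> 'x) \<Rightarrow> bool"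
  where "proper_2bbt_extension G X act \<Omega> \<phi> \<pi> \<longleftrightarrow>
     group_action G \<Omega> \<phi> \<and>
     \<pi> ` \<Omega> = X \<and>
     (\<forall>g\<in>carrier G. \<forall>w\<in>\<Omega>. \<pi> (\<phi> g w) = act g (\<pi> w)) \<and>
     (\<forall>x\<in>X. \<exists>a\<in>\<Omega>. \<exists>b\<in>\<Omega>. a \<noteq> b \<and> \<pi> a = x \<and> \<pi> b = x) \<and>
     (\<forall>a\<in>\<Omega>. \<forall>b\<in>\<Omega>. \<forall>c\<in>\<Omega>. \<forall>e\<in>\<Omega>. \<pi> a \<noteq> \<pi> b \<longrightarrow> \<pi> c \<noteq> \<pi> e \<longrightarrow>
        (\<exists>g\<in>carrier G. \<phi> g a = c \<and> \<phi> g b = e))"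

end

theory Submission
  imports Defs "HOL-Library.Disjoint_Sets" "HOL-Library.Z2"
begin

text \<open>
  Let \<open>a\<close> lie over \<open>x = \<pi> a\<close>. If \<open>G\<close> contains a transposition \<open>t = (x y)\<close>, then
  pair-transitivity yields \<open>g\<close> fixing \<open>a\<close> and moving \<open>t a\<close> inside its fibre; but \<open>g\<close> fixes
  \<open>x\<close> and \<open>y\<close>, so it commutes with \<open>t\<close> and fixes \<open>t a\<close>. This settles \<open>Sym(d)\<close>.

  For \<open>Alt(d)\<close>, two orbit-stabiliser counts give \<open>|G| = |\<Omega>| |\<Omega> - F\<^sub>x| |G\<^sub>a\<^sub>b|\<close>, where all
  fibres have the same size \<open>f \<ge> 2\<close>; so \<open>|G| \<ge> 4 d (d - 1)\<close>, too big for \<open>d \<le> 4\<close>. For \<open>d \<ge> 5\<close>, every \<open>b\<close>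
  outside the fibre of \<open>a\<close> is \<open>(x, \<pi> b, z) a\<close> for some third point \<open>z\<close>, and the number of
  such \<open>z\<close> is the same for all pairs. If it were at least two, every 3-cycle on
  \<open>{1..d} - {x}\<close> would fix \<open>a\<close>, and all fibres would be points. So \<open>z\<close> is unique; then the
  fibres have \<open>d - 2\<close> points, the double transpositions fixing \<open>a\<close> pair off the points of
  \<open>{1..d} - {x}\<close> (so \<open>d\<close> is odd), and for \<open>d \<ge> 10\<close> two of them multiply to an element whose
  square is a 3-cycle fixing \<open>a\<close>, which uniqueness forbids. For \<open>d \<in> {5, 7, 9}\<close> the count
  \<open>d (d - 1) (d - 2)\<^sup>2\<close> does not divide \<open>d!/2\<close>.
\<close>

lemma comp_transpose:
  assumes "inj g"
  shows "g \<circ> transpose p q = transpose (g p) (g q) \<circ> g"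
  by (auto simp: fun_eq_iff transpose_def inj_eq[OF assms])

text \<open>The 3-cycle \<open>p \<mapsto> q \<mapsto> r \<mapsto> p\<close>.\<close>

definition cycle3 :: "'a \<Rightarrow> 'a \<Rightarrow> 'a \<Rightarrow> 'a \<Rightarrow> 'a" where
  "cycle3 p q r = transpose p q \<circ> transpose q r"

lemma cycle3_apply_first: "distinct [p, q, r] \<Longrightarrow> cycle3 p q r p = q"
  by (simp add: cycle3_def transpose_def)

lemma comp_cycle3:
  assumes "inj g"
  shows "g \<circ> cycle3 p q r = cycle3 (g p) (g q) (g r) \<circ> g"
  unfolding cycle3_def by (metis comp_assoc comp_transpose[OF assms])

lemma cycle3_rotate: "distinct [p, q, r] \<Longrightarrow> cycle3 p q r = cycle3 q r p"
  by (auto simp: fun_eq_iff cycle3_def transpose_def)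

lemma cycle3_swap_comp_cycle3: "distinct [p, q, r] \<Longrightarrow> cycle3 p r q \<circ> cycle3 p q r = id"
  by (auto simp: fun_eq_iff cycle3_def transpose_def)

lemma cycle3_eq_comp_cycle3:
  "distinct [x, y, z, z'] \<Longrightarrow> cycle3 x y z = cycle3 x y z' \<circ> cycle3 y z z'"
  by (auto simp: fun_eq_iff cycle3_def transpose_def)

lemma double_transpositions_comp_square:
  assumes "distinct [p, p', q, t, t', r, s]"
  defines "\<alpha> \<equiv> transpose p p' \<circ> transpose t t'" and "\<beta> \<equiv> transpose p' q \<circ> transpose r s"
  shows "(\<alpha> \<circ> \<beta>) \<circ> (\<alpha> \<circ> \<beta>) = cycle3 p q p'"
proof
  fix w
  have "w \<in> {p, p', q, t, t', r, s} \<or> w \<notin> {p, p', q, t, t', r, s}" by blast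
  then show "((\<alpha> \<circ> \<beta>) \<circ> (\<alpha> \<circ> \<beta>)) w = cycle3 p q p' w"
    using assms(1) unfolding \<alpha>_def \<beta>_def cycle3_def by auto
qed

lemma even_card_involution:
  assumes "finite X" and "\<And>x. x \<in> X \<Longrightarrow> h x \<in> X" and "\<And>x. x \<in> X \<Longrightarrow> h (h x) = x"
    and "\<And>x. x \<in> X \<Longrightarrow> h x \<noteq> x"
  shows "even (card X)"
proof -
  have "(\<Sum>x\<in>X. 1 :: bit) = 0"
    by (rule sum_involution_eq_0[where h = h]) (use assms in auto)
  then show ?thesis
    by (metis even_of_nat even_zero sum_constant mult_1_right)
qed

lemma exists_avoiding: "length xs < d \<Longrightarrow> \<exists>z\<in>{1..d}. z \<notin> set xs"
  using card_mono[of "set xs" "{1..d}"] card_length[of xs] by fastforce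

locale two_by_block_transitive = group_action G \<Omega> \<phi>
  for G :: "(nat \<Rightarrow> nat) monoid" and \<Omega> :: "'w set" and \<phi> :: "(nat \<Rightarrow> nat) \<Rightarrow> 'w \<Rightarrow> 'w" +
  fixes d :: nat and \<pi> :: "'w \<Rightarrow> nat"
  assumes two_le_d: "2 \<le> d"
    and mult_eq_comp: "mult G = (\<circ>)"
    and one_eq_id: "one G = id"
    and carrier_permutes: "g \<in> carrier G \<Longrightarrow> g permutes {1..d}"
    and image_projection: "\<pi> ` \<Omega> = {1..d}"
    and projection_equivariant: "g \<in> carrier G \<Longrightarrow> w \<in> \<Omega> \<Longrightarrow> \<pi> (\<phi> g w) = g (\<pi> w)"
    and fibre_nontrivial: "x \<in> {1..d} \<Longrightarrow> \<exists>a\<in>\<Omega>. \<exists>b\<in>\<Omega>. a \<noteq> b \<and> \<pi> a = x \<and> \<pi> b = x"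
    and transitive_on_pairs: "\<lbrakk>a \<in> \<Omega>; b \<in> \<Omega>; c \<in> \<Omega>; e \<in> \<Omega>; \<pi> a \<noteq> \<pi> b; \<pi> c \<noteq> \<pi> e\<rbrakk>
      \<Longrightarrow> \<exists>g\<in>carrier G. \<phi> g a = c \<and> \<phi> g b = e"
begin

definition fibre :: "nat \<Rightarrow> 'w set" where
  "fibre x = {w \<in> \<Omega>. \<pi> w = x}"

lemma comp_in_carrier: "g \<in> carrier G \<Longrightarrow> h \<in> carrier G \<Longrightarrow> g \<circ> h \<in> carrier G"
  using group_hom.axioms(1)[OF group_hom] monoid.m_closed[OF group.is_monoid]
  by (fastforce simp: mult_eq_comp)

lemma id_in_carrier: "id \<in> carrier G"
  using group_hom.axioms(1)[OF group_hom] monoid.one_closed[OF group.is_monoid]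
  by (fastforce simp: one_eq_id)

lemma act_comp: "g \<in> carrier G \<Longrightarrow> h \<in> carrier G \<Longrightarrow> w \<in> \<Omega> \<Longrightarrow> \<phi> (g \<circ> h) w = \<phi> g (\<phi> h w)"
  using composition_rule by (simp add: mult_eq_comp)

lemma act_id: "w \<in> \<Omega> \<Longrightarrow> \<phi> id w = w"
  using id_eq_one by (metis one_eq_id restrict_apply')

lemma act_in: "g \<in> carrier G \<Longrightarrow> w \<in> \<Omega> \<Longrightarrow> \<phi> g w \<in> \<Omega>"
  using element_image by blast

lemma act_cancel: "\<lbrakk>g \<in> carrier G; w \<in> \<Omega>; w' \<in> \<Omega>; \<phi> g w = \<phi> g w'\<rbrakk> \<Longrightarrow> w = w'"
  using inj_prop by (meson inj_onD)

lemma act_fixes_inverse: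
  assumes "g \<in> carrier G" "h \<in> carrier G" "h \<circ> g = id" "w \<in> \<Omega>" "\<phi> g w = w"
  shows "\<phi> h w = w"
  by (metis assms act_comp act_id)

lemma inj_carrier: "g \<in> carrier G \<Longrightarrow> inj g"
  using carrier_permutes permutes_inj by blast

lemma carrier_apply_in: "g \<in> carrier G \<Longrightarrow> x \<in> {1..d} \<Longrightarrow> g x \<in> {1..d}"
  using permutes_in_image[OF carrier_permutes] by blast

lemma finite_carrier: "finite (carrier G)"
  by (rule finite_subset[OF _ finite_permutations[of "{1..d}"]]) (use carrier_permutes in auto)

lemma projection_in: "w \<in> \<Omega> \<Longrightarrow> \<pi> w \<in> {1..d}"
  using image_projection by blast

lemma fibre_nonempty: "x \<in> {1..d} \<Longrightarrow> \<exists>a\<in>\<Omega>. \<pi> a = x"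
  using image_projection by (metis imageE)

lemma fibre_other_point: "b \<in> \<Omega> \<Longrightarrow> \<exists>b'\<in>\<Omega>. \<pi> b' = \<pi> b \<and> b' \<noteq> b"
  using fibre_nontrivial[OF projection_in] by metis

lemma point_stabilizer_moves:
  assumes "a \<in> \<Omega>" "b \<in> \<Omega>" "\<pi> a \<noteq> \<pi> b"
  shows "\<exists>g\<in>carrier G. \<phi> g a = a \<and> \<phi> g b \<noteq> b \<and> \<pi> (\<phi> g b) = \<pi> b"
proof -
  obtain b' where b': "b' \<in> \<Omega>" "\<pi> b' = \<pi> b" "b' \<noteq> b"
    using fibre_other_point[OF assms(2)] by blast
  then obtain g where "g \<in> carrier G" "\<phi> g a = a" "\<phi> g b = b'"
    using transitive_on_pairs[of a b a b'] assms by auto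
  with b' show ?thesis by auto
qed

theorem transpose_notin_carrier:
  assumes "p \<in> {1..d}" "q \<in> {1..d}" "p \<noteq> q"
  shows "transpose p q \<notin> carrier G"
proof
  assume t: "transpose p q \<in> carrier G"
  obtain a where a: "a \<in> \<Omega>" "\<pi> a = p"
    using fibre_nonempty[OF assms(1)] by blast
  define b where "b = \<phi> (transpose p q) a"
  have b: "b \<in> \<Omega>" "\<pi> b = q"
    using act_in[OF t a(1)] projection_equivariant[OF t a(1)] a(2) by (simp_all add: b_def)
  obtain g where g: "g \<in> carrier G" "\<phi> g a = a" "\<phi> g b \<noteq> b" "\<pi> (\<phi> g b) = \<pi> b"
    using point_stabilizer_moves[OF a(1) b(1)] a(2) b(2) assms(3) by blast
  have "g p = p" "g q = q"
    using projection_equivariant[OF g(1)] a b g(2,4) by metis+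
  then have commute: "g \<circ> transpose p q = transpose p q \<circ> g"
    using comp_transpose[OF inj_carrier[OF g(1)]] by simp
  have "\<phi> g b = \<phi> (g \<circ> transpose p q) a"
    using act_comp[OF g(1) t a(1)] by (simp add: b_def)
  also have "\<dots> = b"
    using act_comp[OF t g(1) a(1)] g(2) by (simp add: commute b_def)
  finally show False
    using g(3) by contradiction
qed

lemma exists_outside_fibre: "\<exists>b\<in>\<Omega>. \<pi> b \<noteq> x"
proof -
  have "\<exists>y\<in>{1..d}. y \<noteq> x"
    using two_le_d unfolding Bex_def atLeastAtMost_iff by presburger
  then show ?thesis
    using fibre_nonempty by metis
qed

lemma transitive: "a \<in> \<Omega> \<Longrightarrow> w \<in> \<Omega> \<Longrightarrow> \<exists>g\<in>carrier G. \<phi> g a = w"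
  using exists_outside_fibre transitive_on_pairs by metis

lemma orbit_eq: "a \<in> \<Omega> \<Longrightarrow> orbit G \<phi> a = \<Omega>"
  using transitive act_in unfolding orbit_def by blast

lemma finite_Omega: "finite \<Omega>"
proof -
  obtain a where "a \<in> \<Omega>"
    using exists_outside_fibre by blast
  then have "\<Omega> = (\<lambda>g. \<phi> g a) ` carrier G"
    using orbit_eq unfolding orbit_def by blast
  then show ?thesis
    using finite_carrier by simp
qed

lemma orbit_stabilizer_eq:
  assumes "a \<in> \<Omega>" "b \<in> \<Omega>" "\<pi> b \<noteq> \<pi> a"
  shows "orbit (G\<lparr>carrier := stabilizer G \<phi> a\<rparr>) \<phi> b = \<Omega> - fibre (\<pi> a)"
proof
  show "orbit (G\<lparr>carrier := stabilizer G \<phi> a\<rparr>) \<phi> b \<subseteq> \<Omega> - fibre (\<pi> a)"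
  proof
    fix w assume "w \<in> orbit (G\<lparr>carrier := stabilizer G \<phi> a\<rparr>) \<phi> b"
    then obtain h where h: "h \<in> carrier G" "\<phi> h a = a" "w = \<phi> h b"
      unfolding orbit_def stabilizer_def by auto
    have "\<pi> w = h (\<pi> b)" "h (\<pi> a) = \<pi> a"
      using projection_equivariant[OF h(1)] assms(1,2) h(2,3) by metis+
    moreover have "h (\<pi> b) \<noteq> h (\<pi> a)"
      using inj_carrier[OF h(1)] assms(3) by (simp add: inj_eq)
    ultimately show "w \<in> \<Omega> - fibre (\<pi> a)"
      using act_in[OF h(1) assms(2)] h(3) unfolding fibre_def by auto
  qed
next
  show "\<Omega> - fibre (\<pi> a) \<subseteq> orbit (G\<lparr>carrier := stabilizer G \<phi> a\<rparr>) \<phi> b"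
  proof
    fix w assume "w \<in> \<Omega> - fibre (\<pi> a)"
    then obtain g where "g \<in> carrier G" "\<phi> g a = a" "\<phi> g b = w"
      using transitive_on_pairs[of a b a w] assms unfolding fibre_def by auto
    then show "w \<in> orbit (G\<lparr>carrier := stabilizer G \<phi> a\<rparr>) \<phi> b"
      unfolding orbit_def stabilizer_def by auto
  qed
qed

lemma order_eq_card_pairs:
  assumes "a \<in> \<Omega>" "b \<in> \<Omega>" "\<pi> b \<noteq> \<pi> a"
  shows "order G = card \<Omega> * card (\<Omega> - fibre (\<pi> a))
    * card (stabilizer (G\<lparr>carrier := stabilizer G \<phi> a\<rparr>) \<phi> b)"
proof -
  interpret stab: group_action "G\<lparr>carrier := stabilizer G \<phi> a\<rparr>" \<Omega> \<phi>
    using induced_action[OF stabilizer_subgroup[OF assms(1)]] .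
  have "card \<Omega> * card (stabilizer G \<phi> a) = order G"
    using orbit_stabilizer_theorem[OF assms(1)] orbit_eq[OF assms(1)] by simp
  moreover have "card (\<Omega> - fibre (\<pi> a)) * card (stabilizer (G\<lparr>carrier := stabilizer G \<phi> a\<rparr>) \<phi> b)
      = card (stabilizer G \<phi> a)"
    using stab.orbit_stabilizer_theorem[OF assms(2)] orbit_stabilizer_eq[OF assms]
    by (simp add: order_def)
  ultimately show ?thesis
    by (metis mult.assoc)
qed

lemma card_fibre_le:
  assumes "x \<in> {1..d}" "y \<in> {1..d}"
  shows "card (fibre x) \<le> card (fibre y)"
proof -
  obtain a b where "a \<in> \<Omega>" "\<pi> a = x" "b \<in> \<Omega>" "\<pi> b = y"
    using fibre_nonempty assms by metis
  then obtain g where g: "g \<in> carrier G" "g x = y"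
    using transitive projection_equivariant by metis
  have "\<phi> g ` fibre x \<subseteq> fibre y"
    using g act_in projection_equivariant unfolding fibre_def by auto
  moreover have "inj_on (\<phi> g) (fibre x)"
    using inj_prop[OF g(1)] unfolding fibre_def by (rule inj_on_subset) blast
  ultimately show ?thesis
    using finite_Omega unfolding fibre_def by (intro card_inj_on_le) auto
qed

lemma card_fibre_eq: "x \<in> {1..d} \<Longrightarrow> y \<in> {1..d} \<Longrightarrow> card (fibre x) = card (fibre y)"
  using card_fibre_le le_antisym by blast

lemma two_le_card_fibre:
  assumes "x \<in> {1..d}"
  shows "2 \<le> card (fibre x)"
proof -
  obtain a b where "{a, b} \<subseteq> fibre x" "a \<noteq> b"
    using fibre_nontrivial[OF assms] unfolding fibre_def by blast
  then show ?thesis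
    using finite_Omega card_mono[of "fibre x" "{a, b}"] unfolding fibre_def by simp
qed

lemma card_projection_preimage:
  assumes "S \<subseteq> {1..d}" "x \<in> {1..d}"
  shows "card {w \<in> \<Omega>. \<pi> w \<in> S} = card S * card (fibre x)"
proof -
  have "{w \<in> \<Omega>. \<pi> w \<in> S} = (\<Union>y\<in>S. fibre y)"
    unfolding fibre_def by blast
  moreover have "card (\<Union>y\<in>S. fibre y) = (\<Sum>y\<in>S. card (fibre y))"
  proof (rule card_UN_disjoint)
    show "finite S"
      using assms(1) by (rule finite_subset) simp
    show "\<forall>y\<in>S. finite (fibre y)"
      using finite_Omega unfolding fibre_def by simp
    show "\<forall>y\<in>S. \<forall>z\<in>S. y \<noteq> z \<longrightarrow> fibre y \<inter> fibre z = {}"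
      unfolding fibre_def by blast
  qed
  moreover have "(\<Sum>y\<in>S. card (fibre y)) = (\<Sum>y\<in>S. card (fibre x))"
    using card_fibre_eq assms by (intro sum.cong) blast+
  ultimately show ?thesis
    by simp
qed

lemma order_multiple:
  assumes "x \<in> {1..d}"
  shows "(d * card (fibre x)) * ((d - 1) * card (fibre x)) dvd order G"
proof -
  obtain a b where a: "a \<in> \<Omega>" "\<pi> a = x" and b: "b \<in> \<Omega>" "\<pi> b \<noteq> x"
    using fibre_nonempty[OF assms] exists_outside_fibre by metis
  have "{w \<in> \<Omega>. \<pi> w \<in> {1..d}} = \<Omega>" "{w \<in> \<Omega>. \<pi> w \<in> {1..d} - {x}} = \<Omega> - fibre x"
    using projection_in unfolding fibre_def by auto
  then have "card \<Omega> = d * card (fibre x)" "card (\<Omega> - fibre x) = (d - 1) * card (fibre x)"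
    using card_projection_preimage[OF order_refl assms]
      card_projection_preimage[of "{1..d} - {x}" x] assms by simp_all
  then show ?thesis
    using order_eq_card_pairs[OF a(1) b(1)] a(2) b(2) by simp
qed

lemma order_lower_bound: "4 * (d * (d - 1)) \<le> order G"
proof -
  have "1 \<in> {1..d}"
    using two_le_d by simp
  then have "(d * 2) * ((d - 1) * 2) \<le> (d * card (fibre 1)) * ((d - 1) * card (fibre 1))"
    using two_le_card_fibre by (intro mult_mono) auto
  also have "\<dots> \<le> order G"
    using order_multiple[OF \<open>1 \<in> {1..d}\<close>] finite_carrier id_in_carrier
    by (intro dvd_imp_le) (auto simp: order_def card_gt_0_iff)
  finally show ?thesis
    by simp
qed

end

locale alternating_extension = two_by_block_transitive G \<Omega> \<phi> d \<pi>
  for G \<Omega> and \<phi> :: "(nat \<Rightarrow> nat) \<Rightarrow> 'w \<Rightarrow> 'w" and d \<pi> +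
  assumes double_transposition_in_carrier:
      "\<lbrakk>p \<in> {1..d}; q \<in> {1..d}; r \<in> {1..d}; s \<in> {1..d}; p \<noteq> q; r \<noteq> s\<rbrakk>
        \<Longrightarrow> transpose p q \<circ> transpose r s \<in> carrier G"
    and five_le_d: "5 \<le> d"
begin

lemma cycle3_in_carrier:
  "\<lbrakk>p \<in> {1..d}; q \<in> {1..d}; r \<in> {1..d}; p \<noteq> q; q \<noteq> r\<rbrakk> \<Longrightarrow> cycle3 p q r \<in> carrier G"
  unfolding cycle3_def by (rule double_transposition_in_carrier)

lemma act_cycle3_in_fibre:
  assumes "a \<in> \<Omega>" "{y, z} \<subseteq> {1..d}" "distinct [\<pi> a, y, z]"
  shows "\<phi> (cycle3 (\<pi> a) y z) a \<in> fibre y"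
proof -
  have "cycle3 (\<pi> a) y z \<in> carrier G"
    using assms projection_in by (intro cycle3_in_carrier) auto
  then show ?thesis
    using assms(1) act_in projection_equivariant cycle3_apply_first[OF assms(3)]
    unfolding fibre_def by auto
qed

definition cycle_witnesses :: "'w \<Rightarrow> 'w \<Rightarrow> nat set" where
  "cycle_witnesses a b = {z \<in> {1..d} - {\<pi> a, \<pi> b}. \<phi> (cycle3 (\<pi> a) (\<pi> b) z) a = b}"

lemma finite_cycle_witnesses: "finite (cycle_witnesses a b)"
  unfolding cycle_witnesses_def by simp

lemma cycle_witnesses_transport:
  assumes "a \<in> \<Omega>" "b \<in> \<Omega>" "\<pi> a \<noteq> \<pi> b" "g \<in> carrier G" "z \<in> cycle_witnesses a b"
  shows "g z \<in> cycle_witnesses (\<phi> g a) (\<phi> g b)"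
proof -
  have z: "z \<in> {1..d}" "z \<noteq> \<pi> a" "z \<noteq> \<pi> b" and b: "\<phi> (cycle3 (\<pi> a) (\<pi> b) z) a = b"
    using assms(5) unfolding cycle_witnesses_def by auto
  have ab: "\<pi> a \<in> {1..d}" "\<pi> b \<in> {1..d}"
    using assms(1,2) projection_in by auto
  have g_eq: "\<pi> (\<phi> g a) = g (\<pi> a)" "\<pi> (\<phi> g b) = g (\<pi> b)"
    using projection_equivariant assms(1,2,4) by auto
  have g_distinct: "distinct [g (\<pi> a), g (\<pi> b), g z]"
    using inj_carrier[OF assms(4)] assms(3) z by (simp add: inj_eq)
  have "\<phi> g b = \<phi> (g \<circ> cycle3 (\<pi> a) (\<pi> b) z) a"
    using act_comp[OF assms(4) _ assms(1)] cycle3_in_carrier ab z assms(3) b by simp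
  also have "\<dots> = \<phi> (cycle3 (g (\<pi> a)) (g (\<pi> b)) (g z) \<circ> g) a"
    using comp_cycle3[OF inj_carrier[OF assms(4)]] by simp
  also have "\<dots> = \<phi> (cycle3 (\<pi> (\<phi> g a)) (\<pi> (\<phi> g b)) (g z)) (\<phi> g a)"
    using act_comp[OF _ assms(4,1)] cycle3_in_carrier carrier_apply_in[OF assms(4)] ab z g_distinct
    by (simp add: g_eq)
  finally show ?thesis
    using carrier_apply_in[OF assms(4) z(1)] g_distinct unfolding cycle_witnesses_def g_eq by auto
qed

lemma card_cycle_witnesses_le:
  assumes "a \<in> \<Omega>" "b \<in> \<Omega>" "\<pi> a \<noteq> \<pi> b" "g \<in> carrier G"
  shows "card (cycle_witnesses a b) \<le> card (cycle_witnesses (\<phi> g a) (\<phi> g b))"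
  using cycle_witnesses_transport[OF assms] inj_carrier[OF assms(4)] finite_cycle_witnesses
  by (intro card_inj_on_le) (auto intro: inj_on_subset)

lemma card_cycle_witnesses_eq:
  assumes "a \<in> \<Omega>" "b \<in> \<Omega>" "\<pi> a \<noteq> \<pi> b" "c \<in> \<Omega>" "e \<in> \<Omega>" "\<pi> c \<noteq> \<pi> e"
  shows "card (cycle_witnesses a b) = card (cycle_witnesses c e)"
  using card_cycle_witnesses_le transitive_on_pairs assms by (metis le_antisym)

lemma cycle_witnesses_nonempty:
  assumes "a \<in> \<Omega>" "b \<in> \<Omega>" "\<pi> a \<noteq> \<pi> b"
  shows "cycle_witnesses a b \<noteq> {}"
proof -
  obtain z where z: "z \<in> {1..d}" "z \<notin> set [\<pi> a, \<pi> b]"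
    using exists_avoiding[of "[\<pi> a, \<pi> b]" d] five_le_d by auto
  define b0 where "b0 = \<phi> (cycle3 (\<pi> a) (\<pi> b) z) a"
  have b0: "b0 \<in> \<Omega>" "\<pi> b0 = \<pi> b"
    using act_cycle3_in_fibre[OF assms(1), of "\<pi> b" z] z assms projection_in
    unfolding b0_def fibre_def by auto
  then have "z \<in> cycle_witnesses a b0"
    using z unfolding cycle_witnesses_def b0_def by auto
  moreover obtain g where "g \<in> carrier G" "\<phi> g a = a" "\<phi> g b0 = b"
    using transitive_on_pairs[of a b0 a b] assms b0 by auto
  ultimately show ?thesis
    using cycle_witnesses_transport[OF assms(1) b0(1)] assms(3) b0(2) by fastforce
qed

context
  fixes a :: 'w
  assumes a_in: "a \<in> \<Omega>"
begin

lemma act_cycle3_eq_iff: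
  assumes "{y, z, z'} \<subseteq> {1..d}" "distinct [\<pi> a, y, z, z']"
  shows "\<phi> (cycle3 (\<pi> a) y z) a = \<phi> (cycle3 (\<pi> a) y z') a \<longleftrightarrow> \<phi> (cycle3 y z z') a = a"
proof -
  have x: "\<pi> a \<in> {1..d}"
    using a_in projection_in by blast
  have in_carrier: "cycle3 (\<pi> a) y z' \<in> carrier G" "cycle3 y z z' \<in> carrier G"
    using assms x by (auto intro!: cycle3_in_carrier)
  have "\<phi> (cycle3 (\<pi> a) y z) a = \<phi> (cycle3 (\<pi> a) y z') (\<phi> (cycle3 y z z') a)"
    using cycle3_eq_comp_cycle3[OF assms(2)] act_comp[OF in_carrier a_in] by simp
  then show ?thesis
    using act_cancel[OF in_carrier(1) act_in[OF in_carrier(2) a_in] a_in] by auto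
qed

lemma cycle3_fixes_swap:
  assumes "{p, q, r} \<subseteq> {1..d}" "distinct [p, q, r]" "\<phi> (cycle3 p q r) a = a"
  shows "\<phi> (cycle3 p r q) a = a"
proof (rule act_fixes_inverse[OF _ _ cycle3_swap_comp_cycle3[OF assms(2)] a_in assms(3)])
  show "cycle3 p q r \<in> carrier G" "cycle3 p r q \<in> carrier G"
    using assms(1,2) by (auto intro!: cycle3_in_carrier)
qed

lemma cycle3_fixes_conj:
  assumes "{p, q, r, s, w} \<subseteq> {1..d}" "distinct [p, q, r, s, w]"
    and "\<phi> (cycle3 q r w) a = a" "\<phi> (cycle3 p q s) a = a"
  shows "\<phi> (cycle3 p r s) a = a"
proof -
  define g where "g = cycle3 q r w"
  have in_carrier: "g \<in> carrier G" "cycle3 p q s \<in> carrier G" "cycle3 p r s \<in> carrier G"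
    using assms(1,2) unfolding g_def by (auto intro!: cycle3_in_carrier)
  have "g p = p" "g q = r" "g s = s"
    using assms(2) unfolding g_def cycle3_def by auto
  then have conj: "g \<circ> cycle3 p q s = cycle3 p r s \<circ> g"
    using comp_cycle3[OF inj_carrier[OF in_carrier(1)]] by simp
  have "\<phi> (cycle3 p r s) a = \<phi> (cycle3 p r s \<circ> g) a"
    using act_comp[OF in_carrier(3,1) a_in] assms(3) by (simp add: g_def)
  also have "\<dots> = \<phi> g (\<phi> (cycle3 p q s) a)"
    using act_comp[OF in_carrier(1,2) a_in] by (simp flip: conj)
  finally show ?thesis
    using assms(3,4) by (simp add: g_def)
qed

lemma cycle3_fixes_trans:
  assumes "{y, z, z', z''} \<subseteq> {1..d} - {\<pi> a}" "distinct [y, z, z', z'']"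
    and "\<phi> (cycle3 y z z') a = a" "\<phi> (cycle3 y z z'') a = a"
  shows "\<phi> (cycle3 y z' z'') a = a"
  using act_cycle3_eq_iff[of y z z'] act_cycle3_eq_iff[of y z z''] act_cycle3_eq_iff[of y z' z'']
    assms by auto

lemma cycle3_fixes_closure:
  assumes step: "\<And>y z. \<lbrakk>{y, z} \<subseteq> {1..d} - {\<pi> a}; y \<noteq> z\<rbrakk>
      \<Longrightarrow> \<exists>z'\<in>{1..d} - {\<pi> a, y, z}. \<phi> (cycle3 y z z') a = a"
    and pqr: "{p, q, r} \<subseteq> {1..d} - {\<pi> a}" "distinct [p, q, r]"
  shows "\<phi> (cycle3 p q r) a = a"
proof -
  have "{p, q} \<subseteq> {1..d} - {\<pi> a}" "p \<noteq> q" "{q, r} \<subseteq> {1..d} - {\<pi> a}" "q \<noteq> r"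
    using pqr by auto
  then obtain s w where s: "s \<in> {1..d} - {\<pi> a, p, q}" "\<phi> (cycle3 p q s) a = a"
    and w: "w \<in> {1..d} - {\<pi> a, q, r}" "\<phi> (cycle3 q r w) a = a"
    using step by metis
  consider "s = r" | "w = p" | "s \<noteq> r" "w = s" | "s \<noteq> r" "w \<noteq> p" "w \<noteq> s"
    by blast
  then show ?thesis
  proof cases
    case 1
    with s show ?thesis by simp
  next
    case 2
    with w show ?thesis
      using cycle3_rotate[of p q r] pqr(2) by simp
  next
    case 3
    have "\<phi> (cycle3 q s p) a = a"
      using s pqr cycle3_rotate[of p q s] by auto
    moreover have "\<phi> (cycle3 q s r) a = a"
      using cycle3_fixes_swap[of q r s] w pqr 3 by auto
    ultimately have "\<phi> (cycle3 q p r) a = a"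
      using cycle3_fixes_trans[of q s p r] s pqr 3 by auto
    then have "\<phi> (cycle3 p r q) a = a"
      using cycle3_rotate[of q p r] pqr by auto
    then show ?thesis
      using cycle3_fixes_swap[of p r q] pqr by auto
  next
    case 4
    have "\<phi> (cycle3 p r s) a = a"
      using cycle3_fixes_conj[of p q r s w] s w pqr 4 by auto
    then have "\<phi> (cycle3 p s r) a = a"
      using cycle3_fixes_swap[of p r s] s pqr 4 by auto
    moreover have "\<phi> (cycle3 p s q) a = a"
      using cycle3_fixes_swap[of p q s] s pqr by auto
    ultimately show ?thesis
      using cycle3_fixes_trans[of p s q r] s pqr 4 by auto
  qed
qed

lemma second_cycle_witness:
  assumes yz: "{y, z} \<subseteq> {1..d} - {\<pi> a}" "y \<noteq> z"
    and many: "2 \<le> card (cycle_witnesses a (\<phi> (cycle3 (\<pi> a) y z) a))"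
  shows "\<exists>z'\<in>{1..d} - {\<pi> a, y, z}. \<phi> (cycle3 y z z') a = a"
proof -
  define b where "b = \<phi> (cycle3 (\<pi> a) y z) a"
  have "\<pi> b = y"
    using act_cycle3_in_fibre[OF a_in, of y z] yz unfolding b_def fibre_def by auto
  then have "z \<in> cycle_witnesses a b"
    using yz unfolding cycle_witnesses_def b_def by auto
  moreover have "\<not> cycle_witnesses a b \<subseteq> {z}"
  proof
    assume "cycle_witnesses a b \<subseteq> {z}"
    then have "card (cycle_witnesses a b) \<le> 1"
      using card_mono[of "{z}"] by fastforce
    then show False
      using many unfolding b_def by simp
  qed
  ultimately obtain z' where "z' \<in> cycle_witnesses a b" "z' \<noteq> z"
    by blast
  then show ?thesis
    using act_cycle3_eq_iff[of y z z'] yz \<open>\<pi> b = y\<close> unfolding cycle_witnesses_def b_def by auto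
qed

lemma card_cycle_witnesses_eq_1:
  assumes "b \<in> \<Omega>" "\<pi> b \<noteq> \<pi> a"
  shows "card (cycle_witnesses a b) = 1"
proof (rule ccontr)
  assume "card (cycle_witnesses a b) \<noteq> 1"
  then have many: "2 \<le> card (cycle_witnesses a b')" if "b' \<in> \<Omega>" "\<pi> b' \<noteq> \<pi> a" for b'
  proof -
    have "card (cycle_witnesses a b') = card (cycle_witnesses a b)"
      using card_cycle_witnesses_eq[OF a_in that(1) _ a_in assms(1)] assms(2) that(2) by simp
    moreover have "card (cycle_witnesses a b') \<noteq> 0"
      using cycle_witnesses_nonempty[OF a_in that(1)] that(2) finite_cycle_witnesses by simp
    ultimately show ?thesis
      using \<open>card (cycle_witnesses a b) \<noteq> 1\<close> by linarith
  qed
  have step: "\<exists>z'\<in>{1..d} - {\<pi> a, y, z}. \<phi> (cycle3 y z z') a = a"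
    if "{y, z} \<subseteq> {1..d} - {\<pi> a}" "y \<noteq> z" for y z
    using act_cycle3_in_fibre[OF a_in, of y z] that
    by (intro second_cycle_witness many) (auto simp: fibre_def)
  obtain b1 b2 where b: "b1 \<in> \<Omega>" "b2 \<in> \<Omega>" "b1 \<noteq> b2" "\<pi> b1 = \<pi> b" "\<pi> b2 = \<pi> b"
    using fibre_nontrivial[OF projection_in[OF assms(1)]] by metis
  obtain z1 z2 where z: "z1 \<in> cycle_witnesses a b1" "z2 \<in> cycle_witnesses a b2"
    using cycle_witnesses_nonempty[OF a_in] b assms(2) by (metis all_not_in_conv)
  then have z': "z1 \<in> {1..d} - {\<pi> a, \<pi> b}" "z2 \<in> {1..d} - {\<pi> a, \<pi> b}" "z1 \<noteq> z2"
    and "\<phi> (cycle3 (\<pi> a) (\<pi> b) z1) a = b1" "\<phi> (cycle3 (\<pi> a) (\<pi> b) z2) a = b2"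
    using b(3-5) unfolding cycle_witnesses_def by auto
  moreover have "\<pi> b \<in> {1..d}"
    using assms(1) projection_in by blast
  moreover have "\<phi> (cycle3 (\<pi> b) z1 z2) a = a"
    using z' \<open>\<pi> b \<in> {1..d}\<close> assms(2) by (intro cycle3_fixes_closure[OF step]) auto
  ultimately show False
    using act_cycle3_eq_iff[of "\<pi> b" z1 z2] b(3) assms(2) by auto
qed

lemma cycle3_not_fixes:
  assumes "{p, q, r} \<subseteq> {1..d} - {\<pi> a}" "distinct [p, q, r]"
  shows "\<phi> (cycle3 p q r) a \<noteq> a"
proof
  assume fixed: "\<phi> (cycle3 p q r) a = a"
  define b where "b = \<phi> (cycle3 (\<pi> a) p q) a"
  have b: "b \<in> \<Omega>" "\<pi> b = p"
    using act_cycle3_in_fibre[OF a_in, of p q] assms unfolding b_def fibre_def by auto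
  have "\<phi> (cycle3 (\<pi> a) p r) a = b"
    using act_cycle3_eq_iff[of p q r] fixed assms unfolding b_def by auto
  then have "{q, r} \<subseteq> cycle_witnesses a b"
    using assms b(2) unfolding cycle_witnesses_def b_def by auto
  then have "card {q, r} \<le> card (cycle_witnesses a b)"
    by (rule card_mono[OF finite_cycle_witnesses])
  then have "2 \<le> card (cycle_witnesses a b)"
    using assms(2) by simp
  then show False
    using card_cycle_witnesses_eq_1[OF b(1)] b(2) assms(1) by auto
qed

lemma double_transposition_fixes_swap:
  assumes "{p, q, r, s} \<subseteq> {1..d}" "p \<noteq> q" "r \<noteq> s"
    and "\<phi> (transpose p q \<circ> transpose r s) a = a"
  shows "\<phi> (transpose r s \<circ> transpose p q) a = a"
proof (rule act_fixes_inverse[OF _ _ _ a_in assms(4)])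
  show "transpose p q \<circ> transpose r s \<in> carrier G" "transpose r s \<circ> transpose p q \<in> carrier G"
    using assms(1-3) by (auto intro!: double_transposition_in_carrier)
  show "(transpose r s \<circ> transpose p q) \<circ> (transpose p q \<circ> transpose r s) = id"
    by (simp add: fun_eq_iff)
qed

lemma double_transposition_partners:
  assumes "{p, q, w} \<subseteq> {1..d} - {\<pi> a}" "p \<noteq> q"
  shows "{w' \<in> {1..d} - {\<pi> a, w}. \<phi> (transpose w w' \<circ> transpose p q) a = a}
    = cycle_witnesses a (\<phi> (transpose (\<pi> a) w \<circ> transpose p q) a)"
proof -
  define b where "b = \<phi> (transpose (\<pi> a) w \<circ> transpose p q) a"
  have x: "\<pi> a \<in> {1..d}"
    using a_in projection_in by blast
  have "\<pi> b = w"
    using projection_equivariant[OF double_transposition_in_carrier a_in] x assms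
    unfolding b_def by auto
  moreover have "\<phi> (transpose w w' \<circ> transpose p q) a = a \<longleftrightarrow> \<phi> (cycle3 (\<pi> a) w w') a = b"
    if w': "w' \<in> {1..d} - {\<pi> a, w}" for w'
  proof -
    have in_carrier: "cycle3 (\<pi> a) w w' \<in> carrier G" "transpose w w' \<circ> transpose p q \<in> carrier G"
      using x assms w' by (auto intro!: cycle3_in_carrier double_transposition_in_carrier)
    have "transpose (\<pi> a) w \<circ> transpose p q
        = cycle3 (\<pi> a) w w' \<circ> (transpose w w' \<circ> transpose p q)"
      by (simp add: cycle3_def fun_eq_iff)
    then have "b = \<phi> (cycle3 (\<pi> a) w w') (\<phi> (transpose w w' \<circ> transpose p q) a)"
      using act_comp[OF in_carrier a_in] unfolding b_def by simp
    then show ?thesis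
      using act_cancel[OF in_carrier(1) act_in[OF in_carrier(2) a_in] a_in] by auto
  qed
  ultimately show ?thesis
    unfolding cycle_witnesses_def b_def by auto
qed

lemma ex1_partner:
  assumes "{p, q, w} \<subseteq> {1..d} - {\<pi> a}" "p \<noteq> q"
  shows "\<exists>!w'. w' \<in> {1..d} - {\<pi> a, w} \<and> \<phi> (transpose w w' \<circ> transpose p q) a = a"
proof -
  have "\<phi> (transpose (\<pi> a) w \<circ> transpose p q) a \<in> fibre w"
    using a_in projection_in[OF a_in] assms double_transposition_in_carrier[of "\<pi> a" w p q]
      act_in projection_equivariant unfolding fibre_def by auto
  then have "card {w' \<in> {1..d} - {\<pi> a, w}. \<phi> (transpose w w' \<circ> transpose p q) a = a} = 1"
    using double_transposition_partners[OF assms] card_cycle_witnesses_eq_1 assms(1)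
    unfolding fibre_def by auto
  then obtain u where
    "{w' \<in> {1..d} - {\<pi> a, w}. \<phi> (transpose w w' \<circ> transpose p q) a = a} = {u}"
    by (rule card_1_singletonE)
  then show ?thesis
    unfolding set_eq_iff mem_Collect_eq singleton_iff by (intro ex1I[of _ u]) blast+
qed

definition partner :: "nat \<Rightarrow> nat \<Rightarrow> nat \<Rightarrow> nat" where
  "partner p q w = (THE w'. w' \<in> {1..d} - {\<pi> a, w} \<and> \<phi> (transpose w w' \<circ> transpose p q) a = a)"

lemma
  assumes "{p, q, w} \<subseteq> {1..d} - {\<pi> a}" "p \<noteq> q"
  shows partner_mem: "partner p q w \<in> {1..d} - {\<pi> a, w}"
    and partner_fixes: "\<phi> (transpose w (partner p q w) \<circ> transpose p q) a = a"
  using theI'[OF ex1_partner[OF assms]] unfolding partner_def by auto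

lemma partner_eqI:
  assumes "{p, q, w} \<subseteq> {1..d} - {\<pi> a}" "p \<noteq> q" "w' \<in> {1..d} - {\<pi> a, w}"
    and "\<phi> (transpose w w' \<circ> transpose p q) a = a"
  shows "partner p q w = w'"
  unfolding partner_def
  by (rule the1_equality[OF ex1_partner[OF assms(1,2)]]) (use assms(3,4) in simp)

lemma partner_first:
  assumes "{p, q} \<subseteq> {1..d} - {\<pi> a}" "p \<noteq> q"
  shows "partner p q p = q"
  using assms act_id[OF a_in] by (intro partner_eqI) auto

lemma partner_second:
  assumes "{p, q} \<subseteq> {1..d} - {\<pi> a}" "p \<noteq> q"
  shows "partner p q q = p"
  using assms act_id[OF a_in] by (intro partner_eqI) (auto simp: transpose_commute)

lemma partner_partner:
  assumes "{p, q, w} \<subseteq> {1..d} - {\<pi> a}" "p \<noteq> q"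
  shows "partner p q (partner p q w) = w"
  using partner_mem[OF assms] partner_fixes[OF assms] assms
  by (intro partner_eqI) (auto simp: transpose_commute)

lemma partner_eq_iff:
  assumes "{p, q, u, w} \<subseteq> {1..d} - {\<pi> a}" "p \<noteq> q"
  shows "partner p q w = u \<longleftrightarrow> partner p q u = w"
  using partner_partner[of p q w] partner_partner[of p q u] assms by auto

lemma odd_d: "odd d"
proof -
  obtain p where p: "p \<in> {1..d}" "p \<notin> set [\<pi> a]"
    using exists_avoiding[of "[\<pi> a]" d] five_le_d by auto
  obtain q where q: "q \<in> {1..d}" "q \<notin> set [\<pi> a, p]"
    using exists_avoiding[of "[\<pi> a, p]" d] five_le_d by auto
  have pq: "{p, q} \<subseteq> {1..d} - {\<pi> a}" "p \<noteq> q"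
    using p q by auto
  have "even (card ({1..d} - {\<pi> a}))"
    using partner_mem[OF _ pq(2)] partner_partner[OF _ pq(2)] pq(1)
    by (intro even_card_involution[where h = "partner p q"]) auto
  then show ?thesis
    using projection_in[OF a_in] five_le_d by simp
qed

lemma fixed_double_transposition_pair:
  assumes "10 \<le> d"
  obtains p p' q t t' r s where "{p, p', q, t, t', r, s} \<subseteq> {1..d} - {\<pi> a}"
    and "distinct [p, p', q, t, t', r, s]"
    and "\<phi> (transpose p p' \<circ> transpose t t') a = a" "\<phi> (transpose p' q \<circ> transpose r s) a = a"
proof -
  obtain p where p: "p \<in> {1..d}" "p \<notin> set [\<pi> a]"
    using exists_avoiding[of "[\<pi> a]" d] assms by auto
  obtain p' where p': "p' \<in> {1..d}" "p' \<notin> set [\<pi> a, p]"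
    using exists_avoiding[of "[\<pi> a, p]" d] assms by auto
  obtain q where q: "q \<in> {1..d}" "q \<notin> set [\<pi> a, p, p']"
    using exists_avoiding[of "[\<pi> a, p, p']" d] assms by auto
  \<comment> \<open>As \<open>partner\<close> is an involution, avoiding the partners of earlier points keeps the
    partner of the new point away from them.\<close>
  obtain t where t: "t \<in> {1..d}" "t \<notin> set [\<pi> a, p, p', q, partner p p' q]"
    using exists_avoiding[of "[\<pi> a, p, p', q, partner p p' q]" d] assms by auto
  define t' where "t' = partner p p' t"
  have pp': "{p, p'} \<subseteq> {1..d} - {\<pi> a}" "p \<noteq> p'"
    using p p' by auto
  have t': "t' \<in> {1..d} - {\<pi> a, t}" "\<phi> (transpose t t' \<circ> transpose p p') a = a"
    using partner_mem[OF _ pp'(2)] partner_fixes[OF _ pp'(2)] pp' t unfolding t'_def by auto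
  have t'_iff: "t' = u \<longleftrightarrow> partner p p' u = t" if "u \<in> {1..d} - {\<pi> a}" for u
    using partner_eq_iff[OF _ pp'(2), of u t] pp' that t(1,2) unfolding t'_def by simp
  have "t' \<notin> {p, p', q}"
    using t'_iff[of p] t'_iff[of p'] t'_iff[of q] partner_first[OF pp'] partner_second[OF pp'] pp' q t
    by auto
  obtain r where r: "r \<in> {1..d}"
    "r \<notin> set [\<pi> a, p, p', q, t, t', partner p' q p, partner p' q t, partner p' q t']"
    using exists_avoiding[of "[\<pi> a, p, p', q, t, t', partner p' q p, partner p' q t, partner p' q t']" d]
      assms by auto
  define s where "s = partner p' q r"
  have p'q: "{p', q} \<subseteq> {1..d} - {\<pi> a}" "p' \<noteq> q"
    using p' q by auto
  have s: "s \<in> {1..d} - {\<pi> a, r}" "\<phi> (transpose r s \<circ> transpose p' q) a = a"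
    using partner_mem[OF _ p'q(2)] partner_fixes[OF _ p'q(2)] p'q r unfolding s_def by auto
  have s_iff: "s = u \<longleftrightarrow> partner p' q u = r" if "u \<in> {1..d} - {\<pi> a}" for u
    using partner_eq_iff[OF _ p'q(2), of u r] p'q that r(1,2) unfolding s_def by simp
  have "s \<notin> {p, p', q, t, t'}"
    using s_iff[of p] s_iff[of p'] s_iff[of q] s_iff[of t] s_iff[of t'] partner_first[OF p'q]
      partner_second[OF p'q] pp' p'q t t'(1) r by auto
  show ?thesis
  proof
    show "{p, p', q, t, t', r, s} \<subseteq> {1..d} - {\<pi> a}"
      using p p' q t(1,2) t'(1) r(1,2) s(1) by auto
    show "distinct [p, p', q, t, t', r, s]"
      using p'(2) q(2) t(2) t'(1) r(2) s(1) \<open>t' \<notin> {p, p', q}\<close> \<open>s \<notin> {p, p', q, t, t'}\<close>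
      by auto
    show "\<phi> (transpose p p' \<circ> transpose t t') a = a"
      using double_transposition_fixes_swap[OF _ _ _ t'(2)] p p' t t'(1) by auto
    show "\<phi> (transpose p' q \<circ> transpose r s) a = a"
      using double_transposition_fixes_swap[OF _ _ _ s(2)] p' q r s(1) by auto
  qed
qed

lemma d_le_9: "d \<le> 9"
proof (rule ccontr)
  assume "\<not> d \<le> 9"
  then obtain p p' q t t' r s where points: "{p, p', q, t, t', r, s} \<subseteq> {1..d} - {\<pi> a}"
    and distinct: "distinct [p, p', q, t, t', r, s]"
    and fixed: "\<phi> (transpose p p' \<circ> transpose t t') a = a" "\<phi> (transpose p' q \<circ> transpose r s) a = a"
    using fixed_double_transposition_pair[of thesis] by simp
  define \<alpha> where "\<alpha> = transpose p p' \<circ> transpose t t'"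
  define \<beta> where "\<beta> = transpose p' q \<circ> transpose r s"
  have in_carrier: "\<alpha> \<in> carrier G" "\<beta> \<in> carrier G"
    using points distinct unfolding \<alpha>_def \<beta>_def by (auto intro!: double_transposition_in_carrier)
  then have "\<alpha> \<circ> \<beta> \<in> carrier G" "\<phi> (\<alpha> \<circ> \<beta>) a = a"
    using comp_in_carrier act_comp[OF in_carrier a_in] fixed unfolding \<alpha>_def \<beta>_def by auto
  then have "\<phi> ((\<alpha> \<circ> \<beta>) \<circ> (\<alpha> \<circ> \<beta>)) a = a"
    using act_comp[OF _ _ a_in] by simp
  then have "\<phi> (cycle3 p q p') a = a"
    using double_transpositions_comp_square[OF distinct] unfolding \<alpha>_def \<beta>_def by simp
  then show False
    using cycle3_not_fixes[of p q p'] points distinct by auto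
qed

lemma card_fibre_eq_d_minus_2:
  assumes "x \<in> {1..d}" "x \<noteq> \<pi> a"
  shows "card (fibre x) = d - 2"
proof -
  let ?f = "\<lambda>z. \<phi> (cycle3 (\<pi> a) x z) a"
  have into: "?f z \<in> fibre x" if "z \<in> {1..d} - {\<pi> a, x}" for z
    using act_cycle3_in_fibre[OF a_in, of x z] assms that by auto
  have "bij_betw ?f ({1..d} - {\<pi> a, x}) (fibre x)"
  proof (rule bij_betw_imageI)
    show "inj_on ?f ({1..d} - {\<pi> a, x})"
    proof (rule inj_onI)
      fix z1 z2
      assume z: "z1 \<in> {1..d} - {\<pi> a, x}" "z2 \<in> {1..d} - {\<pi> a, x}" and eq: "?f z1 = ?f z2"
      have b: "?f z1 \<in> \<Omega>" "\<pi> (?f z1) = x"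
        using into[OF z(1)] unfolding fibre_def by auto
      then have "{z1, z2} \<subseteq> cycle_witnesses a (?f z1)"
        using z eq unfolding cycle_witnesses_def by auto
      then show "z1 = z2"
        using card_cycle_witnesses_eq_1[OF b(1)] b(2) assms(2)
        by (metis card_1_singletonE insert_subset singletonD)
    qed
    show "?f ` ({1..d} - {\<pi> a, x}) = fibre x"
    proof
      show "?f ` ({1..d} - {\<pi> a, x}) \<subseteq> fibre x"
        using into by blast
      show "fibre x \<subseteq> ?f ` ({1..d} - {\<pi> a, x})"
      proof
        fix b assume b: "b \<in> fibre x"
        then have "cycle_witnesses a b \<noteq> {}"
          using cycle_witnesses_nonempty[OF a_in] assms(2) unfolding fibre_def by auto
        then obtain z where "z \<in> cycle_witnesses a b"
          by blast
        then show "b \<in> ?f ` ({1..d} - {\<pi> a, x})"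
          using b unfolding cycle_witnesses_def fibre_def by (auto intro!: image_eqI[of _ _ z])
      qed
    qed
  qed
  then show ?thesis
    using bij_betw_same_card assms projection_in[OF a_in] by fastforce
qed

end

theorem d_cases_and_order_dvd: "d \<in> {5, 7, 9} \<and> (d * (d - 2)) * ((d - 1) * (d - 2)) dvd order G"
proof -
  obtain a where a: "a \<in> \<Omega>"
    using exists_outside_fibre by blast
  obtain b where b: "b \<in> \<Omega>" "\<pi> b \<noteq> \<pi> a"
    using exists_outside_fibre by blast
  have "d \<in> {5, 7, 9}"
    using odd_d[OF a] d_le_9[OF a] five_le_d unfolding insert_iff empty_iff by presburger
  moreover have "card (fibre (\<pi> b)) = d - 2"
    using card_fibre_eq_d_minus_2[OF a projection_in[OF b(1)] b(2)] .
  ultimately show ?thesis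
    using order_multiple[OF projection_in[OF b(1)]] by simp
qed

end

lemma two_by_block_transitiveI:
  assumes "proper_2bbt_extension G {1..d} (\<lambda>g x. g x) \<Omega> \<phi> \<pi>" and "2 \<le> d"
    and "mult G = (\<circ>)" "one G = id" "\<And>g. g \<in> carrier G \<Longrightarrow> g permutes {1..d}"
  shows "two_by_block_transitive G \<Omega> \<phi> d \<pi>"
  using assms unfolding proper_2bbt_extension_def two_by_block_transitive_def
    two_by_block_transitive_axioms_def
  by blast

theorem sym_group_no_extension:
  assumes "2 \<le> d"
  shows "\<not> proper_2bbt_extension (sym_group d) {1..d} (\<lambda>g x. g x) \<Omega> \<phi> \<pi>"
proof
  assume "proper_2bbt_extension (sym_group d) {1..d} (\<lambda>g x. g x) \<Omega> \<phi> \<pi>"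
  then interpret two_by_block_transitive "sym_group d" \<Omega> \<phi> d \<pi>
    using assms by (intro two_by_block_transitiveI) (auto simp: sym_group_def)
  have "transpose 1 2 \<in> carrier (sym_group d)"
    using assms by (simp add: sym_group_carrier permutes_swap_id)
  then show False
    using transpose_notin_carrier[of 1 2] assms by simp
qed

theorem alt_group_no_extension:
  assumes "2 \<le> d"
  shows "\<not> proper_2bbt_extension (alt_group d) {1..d} (\<lambda>g x. g x) \<Omega> \<phi> \<pi>"
proof
  assume "proper_2bbt_extension (alt_group d) {1..d} (\<lambda>g x. g x) \<Omega> \<phi> \<pi>"
  then interpret two_by_block_transitive "alt_group d" \<Omega> \<phi> d \<pi>
    using assms by (intro two_by_block_transitiveI)
      (auto simp: alt_group_mult alt_group_one alt_group_carrier)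
  have order: "2 * order (alt_group d) = fact d"
    using alt_group_card_carrier[OF assms] by (simp add: order_def)
  show False
  proof (cases "d \<le> 4")
    case True
    then have "d \<in> {2, 3, 4}"
      using assms by auto
    then show False
      using order order_lower_bound by (auto simp: fact_numeral)
  next
    case False
    have "transpose p q \<circ> transpose r s \<in> carrier (alt_group d)"
      if "p \<in> {1..d}" "q \<in> {1..d}" "r \<in> {1..d}" "s \<in> {1..d}" "p \<noteq> q" "r \<noteq> s" for p q r s
      using that by (simp add: alt_group_carrier permutes_compose permutes_swap_id evenperm_comp
          permutation_swap_id evenperm_swap)
    then interpret alternating_extension "alt_group d" \<Omega> \<phi> d \<pi>
      using False by unfold_locales auto
    from d_cases_and_order_dvd order show False
      by (auto simp: fact_numeral)
  qed
qed

theorem corollary3p6: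
  fixes d :: nat and G :: "(nat \<Rightarrow> nat) monoid"
    and \<Omega> :: "'w set" and \<phi> :: "(nat \<Rightarrow> nat) \<Rightarrow> 'w \<Rightarrow> 'w" and \<pi> :: "'w \<Rightarrow> nat"
  assumes "d \<ge> 2"
    and "G = sym_group d \<or> G = alt_group d"
  shows "\<not> proper_2bbt_extension G {1..d} (\<lambda>g x. g x) \<Omega> \<phi> \<pi>"
  using assms sym_group_no_extension alt_group_no_extension by blast

end
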